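(* Let $P,R\in\mathrm{Sym}(n,\mathbb{R})$ and $Q\in\mathrm{Mat}(n,\mathbb{R})$ with $P$ invertible, and let $B=\begin{bmatrix}P^{-1}&-P^{-1}Q\\-Q^TP^{-1}&Q^TP^{-1}Q-R\end{bmatrix}$, $J=\begin{bmatrix}0&-I_n\\ I_n&0\end{bmatrix}$. Then $JB$ is hyperbolic if and only if $\det\big(a^2P+ia(Q^T-Q)+R\big)\neq0$ for all $a\in\mathbb{R}$.
   Context: A real matrix is hyperbolic if it has no eigenvalue on the imaginary axis. *)

theory Defs
  imports "Jordan_Normal_Form.Jordan_Normal_Form"
begin

definition hyperbolic :: "real mat \<Rightarrow> bool" where
  "hyperbolic A \<longleftrightarrow> (\<forall>k::complex. eigenvalue (map_mat complex_of_real A) k \<longrightarrow> Re k \<noteq> 0)"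

end

theory Submission
  imports Defs
begin

(* Write a vector of length 2n as x @ y. The block structure gives J B (x @ y) = (Qt z + R y) @ z
   with z = Pinv (x - Q y), so J B (x @ y) = k (x @ y) forces x = k P y + Q y, after which the
   first component is the quadratic eigenvalue problem (R + k (Qt - Q) - k^2 P) y = 0; conversely
   every null vector y of this pencil lifts to the eigenvector (k P y + Q y) @ y. Hence the
   eigenvalues of J B are the roots of det (R + k (Qt - Q) - k^2 P), and at k = i a this matrix
   is a^2 P + i a (Q^T - Q) + R. *)

lemma smult_append_vec: "k \<cdot>\<^sub>v (v @\<^sub>v w) = (k \<cdot>\<^sub>v v) @\<^sub>v (k \<cdot>\<^sub>v w)"
  by (rule eq_vecI) (auto simp: nth_append)

lemma ex_vec_append:
  "(\<exists>v \<in> carrier_vec (n + m). P v) \<longleftrightarrow> (\<exists>x \<in> carrier_vec n. \<exists>y \<in> carrier_vec m. P (x @\<^sub>v y))"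
  using all_vec_append[of n m "\<lambda>v. \<not> P v"] by blast

lemma append_vec_eq_zero_iff:
  assumes "x \<in> carrier_vec n" "y \<in> carrier_vec m"
  shows "x @\<^sub>v y = 0\<^sub>v (n + m) \<longleftrightarrow> x = 0\<^sub>v n \<and> y = 0\<^sub>v m"
proof -
  have "0\<^sub>v (n + m) = 0\<^sub>v n @\<^sub>v (0\<^sub>v m :: 'a vec)"
    by (rule eq_vecI) auto
  then show ?thesis
    using assms by simp
qed

lemma inverse_mult_mat_vec_eq_iff:
  fixes P :: "'a::semiring_1 mat"
  assumes "P \<in> carrier_mat n n" "Pinv \<in> carrier_mat n n" "P * Pinv = 1\<^sub>m n" "Pinv * P = 1\<^sub>m n"
    and "v \<in> carrier_vec n" "w \<in> carrier_vec n"
  shows "Pinv *\<^sub>v w = v \<longleftrightarrow> w = P *\<^sub>v v"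
proof
  assume inv_w: "Pinv *\<^sub>v w = v"
  have "w = (P * Pinv) *\<^sub>v w"
    using assms by simp
  also have "\<dots> = P *\<^sub>v v"
    using assms inv_w by (subst assoc_mult_mat_vec[of _ n n]) auto
  finally show "w = P *\<^sub>v v" .
next
  assume "w = P *\<^sub>v v"
  then have "Pinv *\<^sub>v w = (Pinv * P) *\<^sub>v v"
    using assms by (subst assoc_mult_mat_vec[of _ n n]) auto
  also have "\<dots> = v"
    using assms by simp
  finally show "Pinv *\<^sub>v w = v" .
qed

lemma symplectic_mult_append_vec:
  fixes u :: "'a::comm_ring_1 vec"
  assumes "u \<in> carrier_vec n" "w \<in> carrier_vec n"
  shows "four_block_mat (0\<^sub>m n n) (- 1\<^sub>m n) (1\<^sub>m n) (0\<^sub>m n n) *\<^sub>v (u @\<^sub>v w) = (- w) @\<^sub>v u"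
  using assms by (subst four_block_mat_mult_vec[of _ n n]) auto

(* Qt plays the role of Q^T, but no property of the transpose is ever needed. *)
definition hamiltonian_mat :: "nat \<Rightarrow> 'a::comm_ring_1 mat \<Rightarrow> 'a mat \<Rightarrow> 'a mat \<Rightarrow> 'a mat \<Rightarrow> 'a mat" where
  "hamiltonian_mat n Pinv Q Qt R =
     four_block_mat (0\<^sub>m n n) (- 1\<^sub>m n) (1\<^sub>m n) (0\<^sub>m n n) *
     four_block_mat Pinv (- (Pinv * Q)) (- (Qt * Pinv)) (Qt * Pinv * Q - R)"

lemma hamiltonian_mat_carrier:
  assumes "Pinv \<in> carrier_mat n n" "Q \<in> carrier_mat n n" "Qt \<in> carrier_mat n n" "R \<in> carrier_mat n n"
  shows "hamiltonian_mat n Pinv Q Qt R \<in> carrier_mat (n + n) (n + n)"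
  using assms unfolding hamiltonian_mat_def by (intro mult_carrier_mat four_block_carrier_mat) auto

lemma (in comm_ring_hom) mat_hom_hamiltonian_mat:
  assumes "Pinv \<in> carrier_mat n n" "Q \<in> carrier_mat n n" "Qt \<in> carrier_mat n n" "R \<in> carrier_mat n n"
  shows "mat\<^sub>h (hamiltonian_mat n Pinv Q Qt R) = hamiltonian_mat n (mat\<^sub>h Pinv) (mat\<^sub>h Q) (mat\<^sub>h Qt) (mat\<^sub>h R)"
proof -
  have uminus: "mat\<^sub>h (- A) = - mat\<^sub>h A" and minus: "mat\<^sub>h (A - B) = mat\<^sub>h A - mat\<^sub>h B"
    if "A \<in> carrier_mat n n" "B \<in> carrier_mat n n" for A B
    using that by (auto intro!: eq_matI simp: hom_uminus hom_minus)
  let ?J = "four_block_mat (0\<^sub>m n n) (- 1\<^sub>m n) (1\<^sub>m n) (0\<^sub>m n n)"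
  let ?B = "four_block_mat Pinv (- (Pinv * Q)) (- (Qt * Pinv)) (Qt * Pinv * Q - R)"
  have J: "mat\<^sub>h ?J = ?J"
    by (auto intro!: eq_matI simp: hom_uminus)
  have B: "mat\<^sub>h ?B = four_block_mat (mat\<^sub>h Pinv) (- (mat\<^sub>h Pinv * mat\<^sub>h Q)) (- (mat\<^sub>h Qt * mat\<^sub>h Pinv))
      (mat\<^sub>h Qt * mat\<^sub>h Pinv * mat\<^sub>h Q - mat\<^sub>h R)"
    using assms
    by (subst map_four_block_mat[of _ n n _ n], auto simp: mat_hom_mult[of _ n n] uminus simp del: assoc_mult_mat)
      (subst minus, auto simp: mat_hom_mult[of _ n n] simp del: assoc_mult_mat)
  have "?J \<in> carrier_mat (n + n) (n + n)" and "?B \<in> carrier_mat (n + n) (n + n)"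
    using assms by auto
  from mat_hom_mult[OF this] show ?thesis
    unfolding hamiltonian_mat_def J B .
qed

lemma hamiltonian_mat_mult_append_vec:
  fixes Pinv :: "'a::comm_ring_1 mat"
  assumes "Pinv \<in> carrier_mat n n" "Q \<in> carrier_mat n n" "Qt \<in> carrier_mat n n" "R \<in> carrier_mat n n"
    and "x \<in> carrier_vec n" "y \<in> carrier_vec n"
  defines "z \<equiv> Pinv *\<^sub>v (x - Q *\<^sub>v y)"
  shows "hamiltonian_mat n Pinv Q Qt R *\<^sub>v (x @\<^sub>v y) = (Qt *\<^sub>v z + R *\<^sub>v y) @\<^sub>v z"
proof -
  let ?B = "four_block_mat Pinv (- (Pinv * Q)) (- (Qt * Pinv)) (Qt * Pinv * Q - R)"
  have top: "Pinv *\<^sub>v x + (- (Pinv * Q)) *\<^sub>v y = z"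
    unfolding z_def using assms by (intro eq_vecI) (auto simp: mult_minus_distrib_mat_vec)
  have "(Qt * Pinv * Q - R) *\<^sub>v y = (Qt * Pinv * Q) *\<^sub>v y - R *\<^sub>v y"
    using assms by (intro minus_mult_distrib_mat_vec[of _ n n]) auto
  also have "(Qt * Pinv * Q) *\<^sub>v y = Qt *\<^sub>v (Pinv *\<^sub>v (Q *\<^sub>v y))"
    using assms by (subst assoc_mult_mat_vec[of "Qt * Pinv" n n Q n y]) auto
  finally have "(Qt * Pinv * Q - R) *\<^sub>v y = Qt *\<^sub>v (Pinv *\<^sub>v (Q *\<^sub>v y)) - R *\<^sub>v y" .
  then have bottom: "(- (Qt * Pinv)) *\<^sub>v x + (Qt * Pinv * Q - R) *\<^sub>v y = - (Qt *\<^sub>v z + R *\<^sub>v y)"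
    using assms by (intro eq_vecI) (auto simp: mult_minus_distrib_mat_vec)
  have "?B *\<^sub>v (x @\<^sub>v y)
      = (Pinv *\<^sub>v x + (- (Pinv * Q)) *\<^sub>v y) @\<^sub>v ((- (Qt * Pinv)) *\<^sub>v x + (Qt * Pinv * Q - R) *\<^sub>v y)"
    using assms by (intro four_block_mat_mult_vec) auto
  also have "\<dots> = z @\<^sub>v (- (Qt *\<^sub>v z + R *\<^sub>v y))"
    by (simp only: top bottom)
  finally have "?B *\<^sub>v (x @\<^sub>v y) = z @\<^sub>v (- (Qt *\<^sub>v z + R *\<^sub>v y))" .
  moreover have "z \<in> carrier_vec n"
    using assms by simp
  ultimately show ?thesis
    using assms unfolding hamiltonian_mat_def
    by (subst assoc_mult_mat_vec[of _ "n + n" "n + n"]) (auto simp: symplectic_mult_append_vec)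
qed

definition quadratic_pencil :: "'a::comm_ring_1 mat \<Rightarrow> 'a mat \<Rightarrow> 'a mat \<Rightarrow> 'a mat \<Rightarrow> 'a \<Rightarrow> 'a mat" where
  "quadratic_pencil P Q Qt R k = R + k \<cdot>\<^sub>m (Qt - Q) - k\<^sup>2 \<cdot>\<^sub>m P"

lemma quadratic_pencil_mult_vec:
  assumes "P \<in> carrier_mat n n" "Q \<in> carrier_mat n n" "Qt \<in> carrier_mat n n" "R \<in> carrier_mat n n"
    and "y \<in> carrier_vec n"
  shows "quadratic_pencil P Q Qt R k *\<^sub>v y =
    R *\<^sub>v y + k \<cdot>\<^sub>v (Qt *\<^sub>v y) - k \<cdot>\<^sub>v (Q *\<^sub>v y) - k\<^sup>2 \<cdot>\<^sub>v (P *\<^sub>v y)"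
  using assms unfolding quadratic_pencil_def
  by (intro eq_vecI) (auto simp: scalar_prod_def sum_distrib_left sum.distrib sum_subtractf algebra_simps)

lemma hamiltonian_mat_eigen_equation_iff:
  fixes P :: "'a::field mat"
  assumes "P \<in> carrier_mat n n" "Pinv \<in> carrier_mat n n" "Q \<in> carrier_mat n n"
      "Qt \<in> carrier_mat n n" "R \<in> carrier_mat n n"
    and "P * Pinv = 1\<^sub>m n" "Pinv * P = 1\<^sub>m n"
    and "x \<in> carrier_vec n" "y \<in> carrier_vec n"
  shows "hamiltonian_mat n Pinv Q Qt R *\<^sub>v (x @\<^sub>v y) = k \<cdot>\<^sub>v (x @\<^sub>v y) \<longleftrightarrow>
    x = k \<cdot>\<^sub>v (P *\<^sub>v y) + Q *\<^sub>v y \<and> quadratic_pencil P Q Qt R k *\<^sub>v y = 0\<^sub>v n"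
proof -
  define z where "z = Pinv *\<^sub>v (x - Q *\<^sub>v y)"
  have "z \<in> carrier_vec n"
    using assms by (simp add: z_def)
  then have "hamiltonian_mat n Pinv Q Qt R *\<^sub>v (x @\<^sub>v y) = k \<cdot>\<^sub>v (x @\<^sub>v y) \<longleftrightarrow>
      Qt *\<^sub>v z + R *\<^sub>v y = k \<cdot>\<^sub>v x \<and> z = k \<cdot>\<^sub>v y"
    using assms by (simp add: hamiltonian_mat_mult_append_vec z_def[symmetric] smult_append_vec append_vec_eq[of _ n])
  moreover have "z = k \<cdot>\<^sub>v y \<longleftrightarrow> x = k \<cdot>\<^sub>v (P *\<^sub>v y) + Q *\<^sub>v y"
  proof -
    have "z = k \<cdot>\<^sub>v y \<longleftrightarrow> x - Q *\<^sub>v y = P *\<^sub>v (k \<cdot>\<^sub>v y)"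
      unfolding z_def using assms by (intro inverse_mult_mat_vec_eq_iff) auto
    also have "\<dots> \<longleftrightarrow> x = k \<cdot>\<^sub>v (P *\<^sub>v y) + Q *\<^sub>v y"
      using assms by (auto simp: mult_mat_vec[of _ n n] vec_eq_iff diff_eq_eq)
    finally show ?thesis .
  qed
  moreover have "Qt *\<^sub>v (k \<cdot>\<^sub>v y) + R *\<^sub>v y = k \<cdot>\<^sub>v x \<longleftrightarrow> quadratic_pencil P Q Qt R k *\<^sub>v y = 0\<^sub>v n"
    if "x = k \<cdot>\<^sub>v (P *\<^sub>v y) + Q *\<^sub>v y"
    using assms that
    by (auto simp: quadratic_pencil_mult_vec[of _ n] mult_mat_vec[of _ n n] vec_eq_iff power2_eq_square
        algebra_simps)
  ultimately show ?thesis
    by auto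
qed

lemma eigenvalue_hamiltonian_mat_iff:
  fixes P :: "'a::field mat"
  assumes carrier: "P \<in> carrier_mat n n" "Pinv \<in> carrier_mat n n" "Q \<in> carrier_mat n n"
      "Qt \<in> carrier_mat n n" "R \<in> carrier_mat n n"
    and "P * Pinv = 1\<^sub>m n" "Pinv * P = 1\<^sub>m n"
  shows "eigenvalue (hamiltonian_mat n Pinv Q Qt R) k \<longleftrightarrow> det (quadratic_pencil P Q Qt R k) = 0"
proof -
  let ?H = "hamiltonian_mat n Pinv Q Qt R" and ?L = "quadratic_pencil P Q Qt R k"
  have "eigenvalue ?H k \<longleftrightarrow> (\<exists>v \<in> carrier_vec (n + n). v \<noteq> 0\<^sub>v (n + n) \<and> ?H *\<^sub>v v = k \<cdot>\<^sub>v v)"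
    using hamiltonian_mat_carrier[OF carrier(2-5)] unfolding eigenvalue_def eigenvector_def by auto
  also have "\<dots> \<longleftrightarrow> (\<exists>x \<in> carrier_vec n. \<exists>y \<in> carrier_vec n.
      x @\<^sub>v y \<noteq> 0\<^sub>v (n + n) \<and> ?H *\<^sub>v (x @\<^sub>v y) = k \<cdot>\<^sub>v (x @\<^sub>v y))"
    by (rule ex_vec_append)
  also have "\<dots> \<longleftrightarrow> (\<exists>x \<in> carrier_vec n. \<exists>y \<in> carrier_vec n. (x \<noteq> 0\<^sub>v n \<or> y \<noteq> 0\<^sub>v n) \<and>
      x = k \<cdot>\<^sub>v (P *\<^sub>v y) + Q *\<^sub>v y \<and> ?L *\<^sub>v y = 0\<^sub>v n)"
    by (intro bex_cong) (simp_all add: append_vec_eq_zero_iff hamiltonian_mat_eigen_equation_iff[OF assms])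
  also have "\<dots> \<longleftrightarrow> (\<exists>y. y \<in> carrier_vec n \<and> y \<noteq> 0\<^sub>v n \<and> ?L *\<^sub>v y = 0\<^sub>v n)"
  proof -
    have "k \<cdot>\<^sub>v (P *\<^sub>v 0\<^sub>v n) + Q *\<^sub>v 0\<^sub>v n = 0\<^sub>v n"
      using carrier by (auto simp: vec_eq_iff)
    then show ?thesis
      using carrier by (metis add_carrier_vec mult_mat_vec_carrier smult_carrier_vec)
  qed
  also have "\<dots> \<longleftrightarrow> det ?L = 0"
    using carrier by (intro det_0_iff_vec_prod_zero[symmetric]) (simp add: quadratic_pencil_def minus_carrier_mat)
  finally show ?thesis .
qed

theorem lemma2p1:
  fixes P Q R Pinv :: "real mat" and n :: nat
  assumes "P \<in> carrier_mat n n" "Q \<in> carrier_mat n n" "R \<in> carrier_mat n n"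
    and "Pinv \<in> carrier_mat n n"
    and "transpose_mat P = P" and "transpose_mat R = R"
    and "P * Pinv = 1\<^sub>m n" and "Pinv * P = 1\<^sub>m n"
  shows "hyperbolic
      (four_block_mat (0\<^sub>m n n) (- 1\<^sub>m n) (1\<^sub>m n) (0\<^sub>m n n) *
       four_block_mat Pinv (- (Pinv * Q)) (- (transpose_mat Q * Pinv))
                      (transpose_mat Q * Pinv * Q - R))
    \<longleftrightarrow> (\<forall>a::real. det (map_mat complex_of_real ((a^2) \<cdot>\<^sub>m P + R)
                      + (\<i> * complex_of_real a) \<cdot>\<^sub>m map_mat complex_of_real (transpose_mat Q - Q)) \<noteq> 0)"
proof -
  let ?C = "map_mat complex_of_real"
  let ?L = "quadratic_pencil (?C P) (?C Q) (?C (transpose_mat Q)) (?C R)"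
  have carrier: "?C P \<in> carrier_mat n n" "?C Pinv \<in> carrier_mat n n" "?C Q \<in> carrier_mat n n"
      "?C (transpose_mat Q) \<in> carrier_mat n n" "?C R \<in> carrier_mat n n"
    using assms by auto
  have inverse: "?C P * ?C Pinv = 1\<^sub>m n" "?C Pinv * ?C P = 1\<^sub>m n"
    using assms by (metis of_real_hom.mat_hom_mult of_real_hom.mat_hom_one)+
  have pencil_at_imaginary: "?L (\<i> * complex_of_real a) =
      ?C ((a^2) \<cdot>\<^sub>m P + R) + (\<i> * complex_of_real a) \<cdot>\<^sub>m ?C (transpose_mat Q - Q)" for a
    using assms by (auto intro!: eq_matI simp: quadratic_pencil_def power2_eq_square algebra_simps)
  have "hyperbolic (hamiltonian_mat n Pinv Q (transpose_mat Q) R) \<longleftrightarrow>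
      (\<forall>k. Re k = 0 \<longrightarrow> det (?L k) \<noteq> 0)"
    using assms eigenvalue_hamiltonian_mat_iff[OF carrier inverse]
    by (auto simp: hyperbolic_def of_real_hom.mat_hom_hamiltonian_mat)
  also have "\<dots> \<longleftrightarrow> (\<forall>a. det (?L (\<i> * complex_of_real a)) \<noteq> 0)"
  proof
    assume imaginary: "\<forall>a. det (?L (\<i> * complex_of_real a)) \<noteq> 0"
    show "\<forall>k. Re k = 0 \<longrightarrow> det (?L k) \<noteq> 0"
    proof (intro allI impI)
      fix k :: complex
      assume "Re k = 0"
      then have "k = \<i> * complex_of_real (Im k)"
        by (simp add: complex_eq_iff)
      then show "det (?L k) \<noteq> 0"
        using imaginary by metis
    qed
  qed simp
  finally show ?thesis
    unfolding hamiltonian_mat_def pencil_at_imaginary .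
qed

end
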